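(* Let $X$ be a standard one-dimensional Brownian motion starting at $0$, $p$ the atomic proposition with $X(\omega),t\models_n p$ iff $X_t(\omega)\geq1$, and $\phi_1:=\Box_{(1,2)}(\Diamond_{(1,4)}p\wedge\lnot\Diamond_{(1,3)}p)$. Let $n\geq2$, $\tau^{(n)}_p(\omega):=\inf\{t\in\mathbb{N}/n : X(\omega),t\models_n p\}$, and suppose $\tau^{(n)}_p(\omega)\geq6$. Then $X(\omega),t\not\models_n\phi_1$ for $t=0,1/n,\dots,\tau^{(n)}_p(\omega)-5-1/n$; $X(\omega),t\models_n\phi_1$ for $t=\tau^{(n)}_p(\omega)-5,\ \tau^{(n)}_p(\omega)-5+1/n$; $X(\omega),t\not\models_n\phi_1$ for $t=\tau^{(n)}_p(\omega)-5+2/n,\dots,\tau^{(n)}_p(\omega)-2-2/n$.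
   Context: $\mathbb{N}/n:=\{k/n : k\in\mathbb{N}\}$. Discrete semantics at $t\in\mathbb{N}/n$: $\lnot,\wedge$ classical; $X(\omega),t\models_n\Diamond_I\phi$ iff $\exists s\in I\cap\mathbb{N}/n$ with $X(\omega),t+s\models_n\phi$; $X(\omega),t\models_n\Box_I\phi$ iff $\forall s\in I\cap\mathbb{N}/n$, $X(\omega),t+s\models_n\phi$. *)

theory Defs
  imports "HOL-Probability.Probability"
begin

definition std_brownian_motion :: "'a measure \<Rightarrow> (real \<Rightarrow> 'a \<Rightarrow> real) \<Rightarrow> bool" where
  "std_brownian_motion M X \<longleftrightarrow>
     prob_space M \<and>
     (\<forall>t\<ge>0. X t \<in> borel_measurable M) \<and>
     (\<forall>\<omega>\<in>space M. X 0 \<omega> = 0 \<and> continuous_on {0..} (\<lambda>t. X t \<omega>)) \<and>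
     (\<forall>s t. 0 \<le> s \<and> s < t \<longrightarrow>
        distributed M lborel (\<lambda>\<omega>. X t \<omega> - X s \<omega>)
          (\<lambda>x. ennreal (normal_density 0 (sqrt (t - s)) x))) \<and>
     (\<forall>(ts::nat \<Rightarrow> real) k. (\<forall>i<k. 0 \<le> ts i \<and> ts i < ts (Suc i)) \<longrightarrow>
        prob_space.indep_vars M (\<lambda>_. borel) (\<lambda>i \<omega>. X (ts (Suc i)) \<omega> - X (ts i) \<omega>) {..<k})"

definition grid :: "nat \<Rightarrow> real set" where
  "grid n = {real k / real n | k. True}"

datatype mtl = Atom "real \<Rightarrow> bool" | Neg mtl | Conj mtl mtl
  | Dia "real set" mtl | Box "real set" mtl

fun sat :: "nat \<Rightarrow> (real \<Rightarrow> real) \<Rightarrow> real \<Rightarrow> mtl \<Rightarrow> bool" where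
  "sat n x t (Atom a) = a (x t)"
| "sat n x t (Neg \<phi>) = (\<not> sat n x t \<phi>)"
| "sat n x t (Conj \<phi> \<psi>) = (sat n x t \<phi> \<and> sat n x t \<psi>)"
| "sat n x t (Dia I \<phi>) = (\<exists>s \<in> I \<inter> grid n. sat n x (t + s) \<phi>)"
| "sat n x t (Box I \<phi>) = (\<forall>s \<in> I \<inter> grid n. sat n x (t + s) \<phi>)"

definition p_atom :: mtl where
  "p_atom = Atom (\<lambda>v. v \<ge> 1)"

definition phi1 :: mtl where
  "phi1 = Box {1<..<2} (Conj (Dia {1<..<4} p_atom) (Neg (Dia {1<..<3} p_atom)))"

definition tau_p :: "nat \<Rightarrow> (real \<Rightarrow> real) \<Rightarrow> real" where
  "tau_p n x = Inf {t \<in> grid n. sat n x t p_atom}"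

end

theory Submission
  imports Defs
begin

text \<open>The statement is pathwise: only the first grid time \<open>T\<close> at which the path reaches 1
  matters. At \<open>t \<in> [T - 5, T - 5 + 1/n]\<close> every witness \<open>t + s\<close> of the outer box lies at
  distance in \<open>(1, 4)\<close> before \<open>T\<close>, while everything within distance 3 of it is still
  before \<open>T\<close>. Earlier, the witness \<open>s = 1 + 1/n\<close> sees no hit within 4 time units; later, a
  witness \<open>s \<in> {1 + 1/n, 2 - 1/n}\<close> sees the hit at \<open>T\<close> within 3 time units.\<close>

lemma grid_divide: "real k / real n \<in> grid n"
  unfolding grid_def by blast

lemma grid_of_nat: "n > 0 \<Longrightarrow> real m \<in> grid n"
  using grid_divide[of "m * n" n] by simp

lemma grid_nonneg: "t \<in> grid n \<Longrightarrow> 0 \<le> t"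
  unfolding grid_def by auto

lemma grid_add: "a \<in> grid n \<Longrightarrow> b \<in> grid n \<Longrightarrow> a + b \<in> grid n"
  unfolding grid_def by (auto simp: add_divide_distrib[symmetric] simp flip: of_nat_add)

lemma grid_diff:
  assumes "a \<in> grid n" "b \<in> grid n" "b \<le> a" "n > 0"
  shows "a - b \<in> grid n"
proof -
  obtain i j :: nat where ij: "a = i / n" "b = j / n"
    using assms(1,2) unfolding grid_def by auto
  with assms(3,4) have "j \<le> i"
    by (simp add: divide_le_cancel)
  with ij have "a - b = real (i - j) / n"
    by (simp add: of_nat_diff diff_divide_distrib)
  then show ?thesis
    using grid_divide by simp
qed

lemma grid_less_imp_le_diff:
  assumes "a \<in> grid n" "b \<in> grid n" "a < b"
  shows "a \<le> b - 1 / n"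
proof -
  obtain i j :: nat where ij: "a = i / n" "b = j / n"
    using assms(1,2) unfolding grid_def by auto
  with assms(3) have "i < j"
    by (cases "n = 0") (auto simp: divide_less_cancel)
  then have "real i / n \<le> (real j - 1) / n"
    by (simp add: divide_right_mono)
  with ij show ?thesis
    by (simp add: diff_divide_distrib)
qed

lemma grid_Inf_mem:
  assumes "n > 0" "S \<subseteq> grid n" "S \<noteq> {}"
  shows "Inf S \<in> S"
proof -
  define K where "K = {k :: nat. real k / n \<in> S}"
  have S_eq: "S = (\<lambda>k. real k / n) ` K"
    using assms(2) unfolding K_def grid_def by auto
  with assms(3) obtain k where "k \<in> K"
    by blast
  then have least: "(LEAST k. k \<in> K) \<in> K"
    by (rule LeastI)
  have "Inf S = real (LEAST k. k \<in> K) / n"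
  proof (rule cInf_eq_minimum)
    show "real (LEAST k. k \<in> K) / n \<in> S"
      using least unfolding K_def by simp
    show "real (LEAST k. k \<in> K) / n \<le> t" if "t \<in> S" for t
      using that Least_le[of "\<lambda>k. k \<in> K"] unfolding S_eq by (auto intro: divide_right_mono)
  qed
  with least show ?thesis
    unfolding K_def by simp
qed

lemma grid_points_near_1_and_2:
  assumes "n \<ge> 2"
  shows "1 + 1 / n \<in> {1<..<2} \<inter> grid n" "2 - 1 / n \<in> {1<..<2} \<inter> grid n"
proof -
  have "n > 0" and step: "0 < 1 / real n" "1 / real n < 1" "1 / real n \<in> grid n"
    using assms grid_divide[of 1 n] by (auto simp: field_simps)
  have "1 \<in> grid n" "2 \<in> grid n"
    using grid_of_nat[OF \<open>n > 0\<close>, of 1] grid_of_nat[OF \<open>n > 0\<close>, of 2] by simp_all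
  then have "1 + 1 / n \<in> grid n" "2 - 1 / n \<in> grid n"
    using grid_add[OF _ step(3)] grid_diff[OF _ step(3) _ \<open>n > 0\<close>] step(2) by simp_all
  with step(1,2) show "1 + 1 / n \<in> {1<..<2} \<inter> grid n" "2 - 1 / n \<in> {1<..<2} \<inter> grid n"
    by auto
qed

definition first_grid_hit :: "nat \<Rightarrow> (real \<Rightarrow> real) \<Rightarrow> real \<Rightarrow> bool" where
  "first_grid_hit n x T \<longleftrightarrow> T \<in> grid n \<and> 1 \<le> x T \<and> (\<forall>t \<in> grid n. t < T \<longrightarrow> x t < 1)"

lemma sat_p_atom [simp]: "sat n x t p_atom \<longleftrightarrow> 1 \<le> x t"
  by (simp add: p_atom_def)

lemma first_grid_hit_tau_p:
  assumes "n > 0" "{t \<in> grid n. sat n x t p_atom} \<noteq> {}"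
  shows "first_grid_hit n x (tau_p n x)"
proof -
  let ?S = "{t \<in> grid n. sat n x t p_atom}"
  have "Inf ?S \<in> ?S"
    using grid_Inf_mem[OF assms(1) _ assms(2)] by blast
  moreover have "Inf ?S \<le> t" if "t \<in> ?S" for t
    using that by (intro cInf_lower bdd_belowI[of _ 0]) (auto dest: grid_nonneg)
  ultimately show ?thesis
    unfolding first_grid_hit_def tau_p_def by force
qed

lemma sat_phi1_iff:
  "sat n x t phi1 \<longleftrightarrow>
     (\<forall>s \<in> {1<..<2} \<inter> grid n. (\<exists>u \<in> {1<..<4} \<inter> grid n. 1 \<le> x (t + s + u))
                              \<and> \<not> (\<exists>u \<in> {1<..<3} \<inter> grid n. 1 \<le> x (t + s + u)))"
  by (simp add: phi1_def)

lemma phi1_fails_if_hit_within_3: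
  assumes "s \<in> {1<..<2} \<inter> grid n" "u \<in> {1<..<3} \<inter> grid n" "1 \<le> x (t + s + u)"
  shows "\<not> sat n x t phi1"
  using assms unfolding sat_phi1_iff by blast

lemma phi1_fails_before_window:
  assumes hit: "first_grid_hit n x T" and "n \<ge> 2"
    and t: "t \<in> grid n" "t \<le> T - 5 - 1 / n"
  shows "\<not> sat n x t phi1"
proof -
  have s: "1 + 1 / n \<in> {1<..<2} \<inter> grid n"
    using grid_points_near_1_and_2[OF \<open>n \<ge> 2\<close>] by blast
  have "\<not> (\<exists>u \<in> {1<..<4} \<inter> grid n. 1 \<le> x (t + (1 + 1 / n) + u))"
    using hit t grid_add[OF grid_add[OF t(1) s[THEN IntD2]]]
    unfolding first_grid_hit_def by (auto simp: not_le)
  with s show ?thesis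
    unfolding sat_phi1_iff by blast
qed

lemma phi1_holds_in_window:
  assumes hit: "first_grid_hit n x T" and "n > 0"
    and t: "t \<in> grid n" "T - 5 \<le> t" "t \<le> T - 5 + 1 / n"
  shows "sat n x t phi1"
  unfolding sat_phi1_iff
proof (intro ballI conjI)
  fix s
  assume s: "s \<in> {1<..<2} \<inter> grid n"
  have T: "T \<in> grid n" "1 \<le> x T" "\<And>t. t \<in> grid n \<Longrightarrow> t < T \<Longrightarrow> x t < 1"
    using hit unfolding first_grid_hit_def by auto
  have ts: "t + s \<in> grid n"
    using grid_add t(1) s by blast
  have s_le: "s \<le> 2 - 1 / n"
    using grid_less_imp_le_diff[of s n 2] grid_of_nat[OF \<open>n > 0\<close>, of 2] s by auto
  have "T - (t + s) \<in> {1<..<4} \<inter> grid n"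
    using grid_diff[OF T(1) ts] s s_le t \<open>n > 0\<close> by auto
  with T(2) show "\<exists>u \<in> {1<..<4} \<inter> grid n. 1 \<le> x (t + s + u)"
    by (intro bexI[of _ "T - (t + s)"]) auto
  show "\<not> (\<exists>u \<in> {1<..<3} \<inter> grid n. 1 \<le> x (t + s + u))"
  proof
    assume "\<exists>u \<in> {1<..<3} \<inter> grid n. 1 \<le> x (t + s + u)"
    then obtain u where u: "u \<in> {1<..<3} \<inter> grid n" "1 \<le> x (t + s + u)"
      by blast
    have "u \<le> 3 - 1 / n"
      using grid_less_imp_le_diff[of u n 3] grid_of_nat[OF \<open>n > 0\<close>, of 3] u by auto
    moreover have "0 < 1 / real n"
      using \<open>n > 0\<close> by simp
    ultimately have "t + s + u < T"
      using s_le t by linarith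
    with T(3)[of "t + s + u"] grid_add[OF ts, of u] u show False
      by auto
  qed
qed

lemma phi1_fails_after_window:
  assumes hit: "first_grid_hit n x T" and "n \<ge> 2"
    and t: "t \<in> grid n" "T - 5 + 2 / n \<le> t" "t \<le> T - 2 - 2 / n"
  shows "\<not> sat n x t phi1"
proof -
  have "n > 0" "0 < 1 / real n"
    using \<open>n \<ge> 2\<close> by auto
  have T: "T \<in> grid n" "1 \<le> x T"
    using hit unfolding first_grid_hit_def by auto
  have hit_from: "\<not> sat n x t phi1" if "s \<in> {1<..<2} \<inter> grid n" "1 < T - t - s" "T - t - s < 3" for s
  proof (rule phi1_fails_if_hit_within_3[OF that(1)])
    show "T - t - s \<in> {1<..<3} \<inter> grid n"
      using grid_diff[OF T(1) grid_add[OF t(1)], of s] that \<open>n > 0\<close> by (auto simp: diff_diff_eq)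
    show "1 \<le> x (t + s + (T - t - s))"
      using T(2) by simp
  qed
  show ?thesis
  proof (cases "t \<le> T - 4 - 1 / n")
    case True
    have "2 - 1 / n \<in> {1<..<2} \<inter> grid n"
      using grid_points_near_1_and_2[OF \<open>n \<ge> 2\<close>] by blast
    moreover have "1 < T - t - (2 - 1 / n)" "T - t - (2 - 1 / n) < 3"
      using True t \<open>0 < 1 / real n\<close> by linarith+
    ultimately show ?thesis
      by (rule hit_from)
  next
    case False
    have "1 + 1 / n \<in> {1<..<2} \<inter> grid n"
      using grid_points_near_1_and_2[OF \<open>n \<ge> 2\<close>] by blast
    moreover have "1 < T - t - (1 + 1 / n)" "T - t - (1 + 1 / n) < 3"
      using False t \<open>0 < 1 / real n\<close> by linarith+
    ultimately show ?thesis
      by (rule hit_from)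
  qed
qed

theorem lemma5p4:
  fixes M :: "'a measure" and X :: "real \<Rightarrow> 'a \<Rightarrow> real" and n :: nat and \<omega> :: 'a
  assumes "std_brownian_motion M X"
    and "\<omega> \<in> space M"
    and "n \<ge> 2"
    and "{t \<in> grid n. sat n (\<lambda>s. X s \<omega>) t p_atom} \<noteq> {}"
    and "tau_p n (\<lambda>s. X s \<omega>) \<ge> 6"
  shows "(\<forall>t \<in> grid n. t \<le> tau_p n (\<lambda>s. X s \<omega>) - 5 - 1 / real n \<longrightarrow>
            \<not> sat n (\<lambda>s. X s \<omega>) t phi1)
       \<and> sat n (\<lambda>s. X s \<omega>) (tau_p n (\<lambda>s. X s \<omega>) - 5) phi1
       \<and> sat n (\<lambda>s. X s \<omega>) (tau_p n (\<lambda>s. X s \<omega>) - 5 + 1 / real n) phi1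
       \<and> (\<forall>t \<in> grid n. tau_p n (\<lambda>s. X s \<omega>) - 5 + 2 / real n \<le> t
            \<and> t \<le> tau_p n (\<lambda>s. X s \<omega>) - 2 - 2 / real n \<longrightarrow>
            \<not> sat n (\<lambda>s. X s \<omega>) t phi1)"
proof -
  define T where "T = tau_p n (\<lambda>s. X s \<omega>)"
  have "n > 0"
    using assms(3) by simp
  have hit: "first_grid_hit n (\<lambda>s. X s \<omega>) T"
    unfolding T_def using first_grid_hit_tau_p[OF \<open>n > 0\<close> assms(4)] .
  have start: "T - 5 \<in> grid n"
    using grid_diff[of T n 5] grid_of_nat[OF \<open>n > 0\<close>, of 5] hit assms(5) \<open>n > 0\<close>
    unfolding first_grid_hit_def T_def by simp
  have "T - 5 + 1 / n \<in> grid n"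
    using grid_add[OF start grid_divide[of 1 n]] by simp
  with start show ?thesis
    unfolding T_def[symmetric]
    using phi1_fails_before_window[OF hit assms(3)] phi1_fails_after_window[OF hit assms(3)]
      phi1_holds_in_window[OF hit \<open>n > 0\<close>] by simp
qed

end
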